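(* Let $C,M\ge1$ and $\mathbf{Q}=\mathbf{A}+\mathbf{B}\in\mathbb{R}^{CM\times CM}$, where $\mathbf{A}=\mathrm{diag}(a_1\mathbf{1}_C^\top,\dots,a_M\mathbf{1}_C^\top)$ with arbitrary real $a_1,\dots,a_M$, and $\mathbf{B}$ is the $M\times M$ block matrix whose $(i,j)$ block is $b_{i,j}\mathbf{J}_C$ for real $b_{i,j}$. Then $$\mathrm{msgn}(\mathbf{Q})=\mathrm{diag}\big(\mathrm{sgn}(a_1)\mathbf{I}_C,\dots,\mathrm{sgn}(a_M)\mathbf{I}_C\big)+\mathbf{B}',$$ where $\mathbf{B}'$ is an $M\times M$ block matrix whose $(i,j)$ block is a constant multiple of $\mathbf{J}_C$, and every entry of $\mathbf{B}'$ is $\mathcal{O}(M/C)$.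
   Context: $\mathbf{1}_C$ is the all-ones vector in $\mathbb{R}^C$, $\mathbf{J}_C$ the $C\times C$ all-ones matrix, $\mathbf{I}_C$ the identity. For a matrix with SVD $\mathbf{X}=\mathbf{U}\boldsymbol\Sigma\mathbf{V}^\top$, $\mathrm{msgn}(\mathbf{X})=\mathbf{U}\,\mathrm{sgn}(\boldsymbol\Sigma)\mathbf{V}^\top$, with $\mathrm{sgn}(0)=0$. $\mathcal{O}(M/C)$ is with respect to $C/M\to\infty$. *)

theory Defs
  imports Complex_Main "Jordan_Normal_Form.Matrix"
begin

definition is_svd :: "nat \<Rightarrow> real mat \<Rightarrow> real mat \<Rightarrow> real mat \<Rightarrow> real mat \<Rightarrow> bool" where
  "is_svd n X U S V \<longleftrightarrow>
     X \<in> carrier_mat n n \<and> U \<in> carrier_mat n n \<and> S \<in> carrier_mat n n \<and> V \<in> carrier_mat n n \<and>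
     transpose_mat U * U = 1\<^sub>m n \<and> transpose_mat V * V = 1\<^sub>m n \<and>
     diagonal_mat S \<and> (\<forall>i<n. S $$ (i,i) \<ge> 0) \<and>
     X = U * S * transpose_mat V"

definition msgn :: "real mat \<Rightarrow> real mat" where
  "msgn X = (SOME Y. \<exists>U S V. is_svd (dim_row X) X U S V \<and>
                         Y = U * map_mat sgn S * transpose_mat V)"

text \<open>Q = A + B in R^{CM x CM}; row index r lies in block r div C (blocks 0..M-1).\<close>
definition Qmat :: "nat \<Rightarrow> nat \<Rightarrow> (nat \<Rightarrow> real) \<Rightarrow> (nat \<Rightarrow> nat \<Rightarrow> real) \<Rightarrow> real mat" where
  "Qmat C M a b = mat (C*M) (C*M) (\<lambda>(r,s).
      (if r = s then a (r div C) else 0) + b (r div C) (s div C))"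

end

theory Submission
  imports Defs "Jordan_Normal_Form.Char_Poly"
begin

(* Matrices of the form diag(c_1 I_C, ..., c_M I_C) + (d_ij J_C) form an algebra: it is closed under
  sums, scalars, products and transposes.  If Q = U S V^T is an SVD, then
  U sgn(S) V^T = Q V diag(1/s) V^T, and V diag(1/s) V^T is a function of the Gram matrix
  Q^T Q = V diag(s^2) V^T, hence (Lagrange interpolation on its spectrum) a polynomial in Q^T Q.
  So msgn Q lies in the algebra as well, say msgn Q = diag(c_i I_C) + (d_ij J_C).
  For C >= 2 the vector e_(iC) - e_(iC+1) is an eigenvector of Q and of Q^T with eigenvalue a_i,
  and msgn Q maps it to sgn(a_i) times itself, so c_i = sgn(a_i).  Finally msgn Q is a
  contraction; testing it on the indicator vector of block j gives |delta_ij c_i + C d_ij| <= 1,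
  hence |d_ij| <= 2/C.  Since msgn is defined by choice, the existence of an SVD is needed; it is
  derived from the spectral theorem for real symmetric matrices. *)

section \<open>Orthonormal families\<close>

lemma scalar_prod_self_nonneg: "0 \<le> (v :: real vec) \<bullet> v"
  using conjugate_square_ge_0_vec[of v] by simp

lemma scalar_prod_self_pos:
  "(v :: real vec) \<in> carrier_vec n \<Longrightarrow> v \<noteq> 0\<^sub>v n \<Longrightarrow> 0 < v \<bullet> v"
  using conjugate_square_greater_0_vec[of v n] by simp

lemma scalar_prod_lincomb:
  fixes u :: "real vec"
  assumes u: "u \<in> carrier_vec n" and w: "\<And>j. j \<in> J \<Longrightarrow> w j \<in> carrier_vec n"
  shows "u \<bullet> vec n (\<lambda>i. \<Sum>j\<in>J. c j * w j $ i) = (\<Sum>j\<in>J. c j * (u \<bullet> w j))"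
proof -
  have "u \<bullet> vec n (\<lambda>i. \<Sum>j\<in>J. c j * w j $ i) = (\<Sum>i\<in>{0..<n}. \<Sum>j\<in>J. u $ i * (c j * w j $ i))"
    using u by (simp add: scalar_prod_def sum_distrib_left)
  also have "\<dots> = (\<Sum>j\<in>J. \<Sum>i\<in>{0..<n}. u $ i * (c j * w j $ i))" by (rule sum.swap)
  also have "\<dots> = (\<Sum>j\<in>J. c j * (u \<bullet> w j))"
    using w[THEN carrier_vecD] by (intro sum.cong refl) (auto simp: scalar_prod_def sum_distrib_left algebra_simps)
  finally show ?thesis .
qed

definition orthonormal_on :: "nat \<Rightarrow> (nat \<Rightarrow> real vec) \<Rightarrow> nat set \<Rightarrow> bool" where
  "orthonormal_on n u K \<longleftrightarrow> (\<forall>k\<in>K. u k \<in> carrier_vec n) \<and>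
     (\<forall>k\<in>K. \<forall>l\<in>K. u k \<bullet> u l = (if k = l then 1 else 0))"

lemma orthonormal_onD:
  assumes "orthonormal_on n u K" "k \<in> K"
  shows "u k \<in> carrier_vec n" "l \<in> K \<Longrightarrow> u k \<bullet> u l = (if k = l then 1 else 0)"
  using assms unfolding orthonormal_on_def by auto

text \<open>Padded with zero rows, the family is the row set of a singular n x n matrix; a nonzero kernel
  vector of it will do.\<close>
lemma exists_orthogonal_vec:
  fixes v :: "nat \<Rightarrow> real vec"
  assumes K: "finite K" "card K < n" and v: "\<And>k. k \<in> K \<Longrightarrow> v k \<in> carrier_vec n"
  shows "\<exists>x \<in> carrier_vec n. x \<noteq> 0\<^sub>v n \<and> (\<forall>k\<in>K. v k \<bullet> x = 0)"
proof -
  obtain h where h: "bij_betw h {0..<card K} K" using ex_bij_betw_nat_finite[OF K(1)] by blast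
  define c where "c = (\<lambda>i. if i < card K then v (h i) else 0\<^sub>v n)"
  define B where "B = mat\<^sub>r n n (\<lambda>i. if i = n - 1 then 0\<^sub>v n else c i)"
  have c: "c \<in> {0..<n} \<rightarrow> carrier_vec n" using v bij_betwE[OF h] unfolding c_def by auto
  have "det B = 0" unfolding B_def by (rule det_row_0[OF _ c]) (use K in auto)
  moreover have B: "B \<in> carrier_mat n n" unfolding B_def by auto
  ultimately obtain x where x: "x \<in> carrier_vec n" "x \<noteq> 0\<^sub>v n" "B *\<^sub>v x = 0\<^sub>v n"
    using det_0_iff_vec_prod_zero by blast
  have "v k \<bullet> x = 0" if k: "k \<in> K" for k
  proof -
    obtain i where i: "i < card K" "k = h i"
      using h k unfolding bij_betw_def by fastforce
    have "row B i = v k" unfolding B_def c_def using i K(2) v[OF k] by auto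
    then have "v k \<bullet> x = (B *\<^sub>v x) $ i" using B i K(2) by auto
    then show ?thesis using x i K(2) by simp
  qed
  then show ?thesis using x by blast
qed

lemma normalize_vec:
  fixes x :: "real vec"
  assumes x: "x \<in> carrier_vec n" "x \<noteq> 0\<^sub>v n"
  defines "z \<equiv> (1 / sqrt (x \<bullet> x)) \<cdot>\<^sub>v x"
  shows "z \<in> carrier_vec n" "z \<bullet> z = 1" "\<And>y. y \<in> carrier_vec n \<Longrightarrow> y \<bullet> x = 0 \<Longrightarrow> y \<bullet> z = 0"
proof -
  have "0 < x \<bullet> x" by (rule scalar_prod_self_pos[OF x])
  then show "z \<bullet> z = 1" unfolding z_def using x(1) by simp
qed (use x in \<open>auto simp: z_def\<close>)

lemma orthonormal_on_extend:
  assumes "K \<subseteq> {..<n}" "orthonormal_on n u K"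
  shows "\<exists>u'. (\<forall>k\<in>K. u' k = u k) \<and> orthonormal_on n u' {..<n}"
proof -
  have "finite ({..<n} - K)" by simp
  then show ?thesis using assms
  proof (induction "{..<n} - K" arbitrary: K u rule: finite_psubset_induct)
    case psubset
    show ?case
    proof (cases "K = {..<n}")
      case True
      then show ?thesis using psubset.prems by blast
    next
      case False
      then obtain k0 where k0: "k0 < n" "k0 \<notin> K" using psubset.prems(1) by blast
      have "card K < card {..<n}"
        using k0 psubset.prems(1) by (intro psubset_card_mono) auto
      then obtain x where x: "x \<in> carrier_vec n" "x \<noteq> 0\<^sub>v n" "\<forall>k\<in>K. u k \<bullet> x = 0"
        using exists_orthogonal_vec[of K n u] psubset.prems finite_subset orthonormal_onD(1)
        by (metis card_lessThan finite_lessThan)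
      define z where "z = (1 / sqrt (x \<bullet> x)) \<cdot>\<^sub>v x"
      note z = normalize_vec[OF x(1,2), folded z_def]
      have zu: "u k \<bullet> z = 0" "z \<bullet> u k = 0" if "k \<in> K" for k
        using z(3) x(3) that orthonormal_onD(1)[OF psubset.prems(2) that] z(1)
        by (auto simp: comm_scalar_prod[of z n])
      have orth: "orthonormal_on n (u(k0 := z)) (insert k0 K)"
        using psubset.prems(2) k0(2) z(1,2) zu unfolding orthonormal_on_def by auto
      have "{..<n} - insert k0 K \<subset> {..<n} - K" using k0 by auto
      moreover have "insert k0 K \<subseteq> {..<n}" using k0(1) psubset.prems(1) by auto
      ultimately have "\<exists>u'. (\<forall>k\<in>insert k0 K. u' k = (u(k0 := z)) k) \<and> orthonormal_on n u' {..<n}"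
        using orth by (rule psubset.hyps(2))
      then obtain u' where u': "\<forall>k\<in>insert k0 K. u' k = (u(k0 := z)) k" "orthonormal_on n u' {..<n}"
        by blast
      have "\<forall>k\<in>K. u' k = u k" using u'(1) k0(2) by force
      then show ?thesis using u'(2) by blast
    qed
  qed
qed

lemma orthonormal_on_scalar_prod_tail_lincomb:
  assumes won: "orthonormal_on n w {..<n}" and l: "l < n"
  shows "w l \<bullet> vec n (\<lambda>i. \<Sum>j\<in>{0..<n-m}. y $ j * w (m+j) $ i) = (if m \<le> l then y $ (l - m) else 0)"
proof -
  have "w l \<bullet> vec n (\<lambda>i. \<Sum>j\<in>{0..<n-m}. y $ j * w (m+j) $ i) = (\<Sum>j\<in>{0..<n-m}. y $ j * (w l \<bullet> w (m+j)))"
    by (rule scalar_prod_lincomb) (use orthonormal_onD(1)[OF won] l in auto)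
  also have "\<dots> = (\<Sum>j\<in>{0..<n-m}. if j = l - m \<and> m \<le> l then y $ j else 0)"
    using l orthonormal_onD(2)[OF won] by (intro sum.cong refl) auto
  also have "\<dots> = (if m \<le> l then y $ (l - m) else 0)"
    using l by (auto simp: sum.delta)
  finally show ?thesis .
qed

section \<open>Diagonal and orthogonal matrices\<close>

lemma mat_diag_dims[simp]: "dim_row (mat_diag n g) = n" "dim_col (mat_diag n g) = n"
  unfolding mat_diag_def by simp_all

lemma mat_diag_add: "mat_diag n g + mat_diag n h = mat_diag n (\<lambda>k. g k + h k :: real)"
  by (rule eq_matI) (auto simp: mat_diag_def)

lemma mat_diag_smult: "c \<cdot>\<^sub>m mat_diag n g = mat_diag n (\<lambda>k. c * g k :: real)"
  by (rule eq_matI) (auto simp: mat_diag_def)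

lemma mat_diag_cong: "(\<And>k. k < n \<Longrightarrow> g k = h k) \<Longrightarrow> mat_diag n g = mat_diag n h"
  by (rule eq_matI) (auto simp: mat_diag_def)

lemma transpose_mat_diag: "(mat_diag n g)\<^sup>T = mat_diag n g"
  by (rule eq_matI) (auto simp: mat_diag_def)

lemma map_mat_sgn_mat_diag: "map_mat sgn (mat_diag n g) = mat_diag n (\<lambda>k. sgn (g k :: real))"
  by (rule eq_matI) (auto simp: mat_diag_def)

lemma index_mat_diag_mult_vec:
  assumes "w \<in> carrier_vec n" "k < n"
  shows "(mat_diag n g *\<^sub>v w) $ k = g k * w $ k"
proof -
  have "(mat_diag n g *\<^sub>v w) $ k = (\<Sum>j\<in>{0..<n}. (if k = j then g j else 0) * w $ j)"
    using assms by (simp add: mat_diag_def scalar_prod_def)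
  also have "\<dots> = (\<Sum>j\<in>{0..<n}. if j = k then g k * w $ k else 0)" by (intro sum.cong) auto
  also have "\<dots> = g k * w $ k" using assms by simp
  finally show ?thesis .
qed

lemma mat_diag_contraction:
  fixes g :: "nat \<Rightarrow> real"
  assumes g: "\<And>k. k < n \<Longrightarrow> \<bar>g k\<bar> \<le> 1" and z: "z \<in> carrier_vec n"
  shows "(mat_diag n g *\<^sub>v z) \<bullet> (mat_diag n g *\<^sub>v z) \<le> z \<bullet> z"
proof -
  have "(mat_diag n g *\<^sub>v z) \<bullet> (mat_diag n g *\<^sub>v z) = (\<Sum>k\<in>{0..<n}. (g k * g k) * (z $ k * z $ k))"
    using z index_mat_diag_mult_vec[OF z] by (simp add: scalar_prod_def algebra_simps)
  also have "\<dots> \<le> (\<Sum>k\<in>{0..<n}. 1 * (z $ k * z $ k))"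
    using g by (intro sum_mono mult_right_mono) (auto simp: abs_le_square_iff[of _ 1, simplified] power2_eq_square)
  also have "\<dots> = z \<bullet> z" using z by (simp add: scalar_prod_def)
  finally show ?thesis .
qed

definition mat_of_col_fun :: "nat \<Rightarrow> (nat \<Rightarrow> real vec) \<Rightarrow> real mat" where
  "mat_of_col_fun n u = mat n n (\<lambda>(i,j). u j $ i)"

lemma mat_of_col_fun_carrier[simp]: "mat_of_col_fun n u \<in> carrier_mat n n"
  unfolding mat_of_col_fun_def by simp

lemma mat_of_col_fun_dims[simp]: "dim_row (mat_of_col_fun n u) = n" "dim_col (mat_of_col_fun n u) = n"
  unfolding mat_of_col_fun_def by simp_all

lemma index_mat_of_col_fun[simp]: "i < n \<Longrightarrow> k < n \<Longrightarrow> mat_of_col_fun n u $$ (i,k) = u k $ i"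
  unfolding mat_of_col_fun_def by simp

lemma col_mat_of_col_fun: "k < n \<Longrightarrow> u k \<in> carrier_vec n \<Longrightarrow> col (mat_of_col_fun n u) k = u k"
  unfolding mat_of_col_fun_def by (auto intro!: eq_vecI)

lemma orthonormal_on_orthogonal_mat:
  assumes on: "orthonormal_on n u {..<n}"
  shows "(mat_of_col_fun n u)\<^sup>T * mat_of_col_fun n u = 1\<^sub>m n"
    and "mat_of_col_fun n u * (mat_of_col_fun n u)\<^sup>T = 1\<^sub>m n"
proof -
  show UU: "(mat_of_col_fun n u)\<^sup>T * mat_of_col_fun n u = 1\<^sub>m n"
  proof (rule eq_matI)
    fix i j assume ij: "i < dim_row (1\<^sub>m n)" "j < dim_col (1\<^sub>m n)"
    then have "((mat_of_col_fun n u)\<^sup>T * mat_of_col_fun n u) $$ (i,j) = u i \<bullet> u j"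
      using col_mat_of_col_fun[of _ n u] orthonormal_onD(1)[OF on] by simp
    then show "((mat_of_col_fun n u)\<^sup>T * mat_of_col_fun n u) $$ (i,j) = 1\<^sub>m n $$ (i,j)"
      using orthonormal_onD(2)[OF on] ij by simp
  qed auto
  show "mat_of_col_fun n u * (mat_of_col_fun n u)\<^sup>T = 1\<^sub>m n"
    by (rule mat_mult_left_right_inverse[OF _ _ UU]) auto
qed

lemma orthonormal_basis_eq_vecI:
  assumes on: "orthonormal_on n u {..<n}" and ab: "a \<in> carrier_vec n" "b \<in> carrier_vec n"
    and eq: "\<And>l. l < n \<Longrightarrow> u l \<bullet> a = u l \<bullet> b"
  shows "a = b"
proof -
  let ?P = "mat_of_col_fun n u"
  have "?P\<^sup>T *\<^sub>v a = ?P\<^sup>T *\<^sub>v b"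
    using eq orthonormal_onD(1)[OF on] ab col_mat_of_col_fun[of _ n u] by (intro eq_vecI) simp_all
  then have "(?P * ?P\<^sup>T) *\<^sub>v a = (?P * ?P\<^sup>T) *\<^sub>v b"
    using ab by (simp add: assoc_mult_mat_vec[of _ n n _ n])
  then show ?thesis using orthonormal_on_orthogonal_mat(2)[OF on] ab by simp
qed

lemma orthogonal_mat_scalar_prod:
  fixes U :: "real mat"
  assumes U: "U \<in> carrier_mat n n" "U\<^sup>T * U = 1\<^sub>m n" and z: "z \<in> carrier_vec n"
  shows "(U *\<^sub>v z) \<bullet> (U *\<^sub>v z) = z \<bullet> z"
proof -
  have "(U *\<^sub>v z) \<bullet> (U *\<^sub>v z) = (U\<^sup>T *\<^sub>v (U *\<^sub>v z)) \<bullet> z"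
    using transpose_vec_mult_scalar[OF U(1) z, of "U *\<^sub>v z"] U(1) z by simp
  also have "U\<^sup>T *\<^sub>v (U *\<^sub>v z) = z"
    using U z assoc_mult_mat_vec[of "U\<^sup>T" n n U n z] by simp
  finally show ?thesis .
qed

lemma mult_mat_of_col_fun:
  fixes X :: "real mat"
  assumes X: "X \<in> carrier_mat n n"
    and uv: "\<And>k. k < n \<Longrightarrow> u k \<in> carrier_vec n" "\<And>k. k < n \<Longrightarrow> v k \<in> carrier_vec n"
    and Xv: "\<And>k. k < n \<Longrightarrow> X *\<^sub>v v k = \<sigma> k \<cdot>\<^sub>v u k"
  shows "X * mat_of_col_fun n v = mat_of_col_fun n u * mat_diag n \<sigma>"
proof (rule eq_matI)
  fix i k assume "i < dim_row (mat_of_col_fun n u * mat_diag n \<sigma>)" "k < dim_col (mat_of_col_fun n u * mat_diag n \<sigma>)"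
  then have ik: "i < n" "k < n" by auto
  have "(X * mat_of_col_fun n v) $$ (i,k) = (X *\<^sub>v v k) $ i"
    using X ik col_mat_of_col_fun[of k n v] uv(2)[OF ik(2)] by simp
  also have "\<dots> = (mat_of_col_fun n u * mat_diag n \<sigma>) $$ (i,k)"
    using Xv ik uv(1)[OF ik(2)] by (subst mat_diag_mult_right[of _ n n]) auto
  finally show "(X * mat_of_col_fun n v) $$ (i,k) = (mat_of_col_fun n u * mat_diag n \<sigma>) $$ (i,k)" .
qed (use X in auto)

section \<open>The spectral theorem for real symmetric matrices\<close>

lemma symmetric_scalar_prod:
  fixes A :: "real mat"
  assumes A: "A \<in> carrier_mat n n" "A\<^sup>T = A" and ab: "a \<in> carrier_vec n" "b \<in> carrier_vec n"
  shows "a \<bullet> (A *\<^sub>v b) = (A *\<^sub>v a) \<bullet> b"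
  using transpose_vec_mult_scalar[OF A(1) ab(2) ab(1)] A(2) by simp

text \<open>For a complex eigenvector w, the number w* A w = mu |w|^2 equals its own conjugate because A
  is real symmetric.\<close>
lemma symmetric_complex_eigenvalue_real:
  fixes A :: "real mat"
  assumes A: "A \<in> carrier_mat n n" "A\<^sup>T = A"
    and ev: "eigenvalue (map_mat complex_of_real A) \<mu>"
  shows "\<mu> = of_real (Re \<mu>)"
proof -
  let ?A = "map_mat complex_of_real A"
  obtain w where "eigenvector ?A w \<mu>" using ev unfolding eigenvalue_def by blast
  then have w: "w \<in> carrier_vec n" "w \<noteq> 0\<^sub>v n" "?A *\<^sub>v w = \<mu> \<cdot>\<^sub>v w"
    unfolding eigenvector_def using A(1) by auto
  have sym: "A $$ (i,j) = A $$ (j,i)" if "i < n" "j < n" for i j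
    using that A by (metis carrier_matD index_transpose_mat(1))
  define s where "s = (\<Sum>i\<in>{0..<n}. cnj (w$i) * (?A *\<^sub>v w)$i)"
  define r where "r = (\<Sum>i\<in>{0..<n}. (cmod (w$i))^2)"
  have "s = (\<Sum>i\<in>{0..<n}. \<mu> * (w$i * cnj (w$i)))"
    unfolding s_def using w by (intro sum.cong) (auto simp: algebra_simps)
  also have "\<dots> = \<mu> * of_real r"
    unfolding r_def of_real_sum sum_distrib_left by (simp add: complex_norm_square[symmetric])
  finally have s_eig: "s = \<mu> * of_real r" .
  have s_quad: "s = (\<Sum>i\<in>{0..<n}. \<Sum>j\<in>{0..<n}. cnj (w$i) * of_real (A$$(i,j)) * w$j)"
    unfolding s_def using w(1) A(1)
    by (intro sum.cong) (auto simp: scalar_prod_def sum_distrib_left mult.assoc)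
  have "cnj s = (\<Sum>i\<in>{0..<n}. \<Sum>j\<in>{0..<n}. w$i * of_real (A$$(i,j)) * cnj (w$j))"
    unfolding s_quad by (simp add: cnj_sum)
  also have "\<dots> = (\<Sum>j\<in>{0..<n}. \<Sum>i\<in>{0..<n}. w$i * of_real (A$$(i,j)) * cnj (w$j))"
    by (rule sum.swap)
  also have "\<dots> = s" unfolding s_quad
    by (intro sum.cong refl) (auto simp: sym mult.commute mult.left_commute)
  finally have "cnj s = s" .
  obtain i where i: "i < n" "w $ i \<noteq> 0" using w by (metis carrier_vecD eq_vecI index_zero_vec(1,2))
  have "r > 0" unfolding r_def using sum_pos2[of "{0..<n}" i "\<lambda>i. (cmod (w$i))^2"] i by auto
  then have "cnj \<mu> = \<mu>" using \<open>cnj s = s\<close> s_eig by simp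
  then show ?thesis by (simp add: complex_eq_iff)
qed

lemma symmetric_real_eigenvector:
  fixes A :: "real mat"
  assumes A: "A \<in> carrier_mat n n" "A\<^sup>T = A" and n: "n > 0"
  shows "\<exists>y e. eigenvector A y e"
proof -
  let ?A = "map_mat complex_of_real A"
  have cA: "?A \<in> carrier_mat n n" using A(1) by simp
  obtain as where as: "char_poly ?A = (\<Prod>a\<leftarrow>as. [:-a,1:])" "length as = n"
    using char_poly_factorized[OF cA] by blast
  then obtain \<mu> rest where "as = \<mu> # rest" using n by (cases as) auto
  then have root: "poly (char_poly ?A) \<mu> = 0" using as(1) by simp
  then have "\<mu> = of_real (Re \<mu>)"
    using symmetric_complex_eigenvalue_real[OF A] eigenvalue_root_char_poly[OF cA] by blast
  then have "poly (char_poly ?A) (of_real (Re \<mu>)) = 0" using root by simp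
  moreover have "char_poly ?A = map_poly of_real (char_poly A)"
    by (rule comm_ring_hom.char_poly_hom[OF of_real_hom.comm_ring_hom_axioms A(1)])
  ultimately have "poly (char_poly A) (Re \<mu>) = 0" by (simp add: of_real_hom.poly_map_poly)
  then show ?thesis using eigenvalue_root_char_poly[OF A(1)] unfolding eigenvalue_def by blast
qed

text \<open>The span of w m, ..., w (n - 1) is A-invariant, as its complement consists of eigenvectors
  and A is symmetric; so an eigenvector of the compression of A to it lifts to one of A.\<close>
lemma compression_eigenvector_lift:
  fixes A :: "real mat"
  assumes A: "A \<in> carrier_mat n n" "A\<^sup>T = A" and won: "orthonormal_on n w {..<n}"
    and low: "\<And>l. l < m \<Longrightarrow> A *\<^sub>v w l = lam l \<cdot>\<^sub>v w l"
    and y: "y \<in> carrier_vec (n - m)"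
    and By: "mat (n-m) (n-m) (\<lambda>(i,j). w (m+i) \<bullet> (A *\<^sub>v w (m+j))) *\<^sub>v y = \<mu> \<cdot>\<^sub>v y"
  defines "x \<equiv> vec n (\<lambda>i. \<Sum>j\<in>{0..<n-m}. y $ j * w (m+j) $ i)"
  shows "A *\<^sub>v x = \<mu> \<cdot>\<^sub>v x"
proof -
  have wc: "\<And>l. l < n \<Longrightarrow> w l \<in> carrier_vec n"
    and wo: "\<And>k l. k < n \<Longrightarrow> l < n \<Longrightarrow> w k \<bullet> w l = (if k = l then 1 else 0)"
    using orthonormal_onD[OF won] by auto
  have wmj: "\<And>j. j \<in> {0..<n-m} \<Longrightarrow> w (m+j) \<in> carrier_vec n" using wc by auto
  have xc: "x \<in> carrier_vec n" unfolding x_def by simp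
  note coord = orthonormal_on_scalar_prod_tail_lincomb[OF won, where m = m and y = y, folded x_def]
  have "w l \<bullet> (A *\<^sub>v x) = \<mu> * (w l \<bullet> x)" if l: "l < n" for l
  proof -
    have Awl: "A *\<^sub>v w l \<in> carrier_vec n" using A wc[OF l] by simp
    have "w l \<bullet> (A *\<^sub>v x) = (\<Sum>j\<in>{0..<n-m}. y $ j * ((A *\<^sub>v w l) \<bullet> w (m+j)))"
      unfolding symmetric_scalar_prod[OF A wc[OF l] xc] unfolding x_def
      by (rule scalar_prod_lincomb[OF Awl wmj])
    also have "\<dots> = \<mu> * (w l \<bullet> x)"
    proof (cases "m \<le> l")
      case False
      then have "(A *\<^sub>v w l) \<bullet> w (m+j) = 0" if "j \<in> {0..<n-m}" for j
        using low[of l] wo[of l "m+j"] that l wc[of l] wc[of "m+j"] by simp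
      then show ?thesis using coord[OF l] False by simp
    next
      case True
      have "(A *\<^sub>v w l) \<bullet> w (m+j) = w (m + (l - m)) \<bullet> (A *\<^sub>v w (m+j))" if "j \<in> {0..<n-m}" for j
        using symmetric_scalar_prod[OF A wc[OF l] wmj[OF that]] True by simp
      then have "(\<Sum>j\<in>{0..<n-m}. y $ j * ((A *\<^sub>v w l) \<bullet> w (m+j)))
          = (mat (n-m) (n-m) (\<lambda>(i,j). w (m+i) \<bullet> (A *\<^sub>v w (m+j))) *\<^sub>v y) $ (l - m)"
        using y True l by (simp add: scalar_prod_def mult.commute)
      then show ?thesis unfolding By using coord[OF l] y True l by simp
    qed
    finally show ?thesis .
  qed
  then show ?thesis by (intro orthonormal_basis_eq_vecI[OF won]) (use A xc wc in auto)
qed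

lemma symmetric_orthogonal_eigenvector:
  fixes A :: "real mat"
  assumes A: "A \<in> carrier_mat n n" "A\<^sup>T = A" and mn: "m < n"
    and on: "orthonormal_on n v {..<m}" and ev: "\<And>k. k < m \<Longrightarrow> A *\<^sub>v v k = lam k \<cdot>\<^sub>v v k"
  shows "\<exists>z \<mu>. z \<in> carrier_vec n \<and> z \<bullet> z = 1 \<and> (\<forall>k<m. v k \<bullet> z = 0) \<and> A *\<^sub>v z = \<mu> \<cdot>\<^sub>v z"
proof -
  obtain w where wv: "\<forall>k<m. w k = v k" and won: "orthonormal_on n w {..<n}"
    using orthonormal_on_extend[of "{..<m}" n v] on mn by auto
  have wc: "\<And>l. l < n \<Longrightarrow> w l \<in> carrier_vec n" using orthonormal_onD(1)[OF won] by simp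
  define B where "B = mat (n-m) (n-m) (\<lambda>(i,j). w (m+i) \<bullet> (A *\<^sub>v w (m+j)))"
  have "w i \<bullet> (A *\<^sub>v w j) = w j \<bullet> (A *\<^sub>v w i)" if "i < n" "j < n" for i j
    using symmetric_scalar_prod[OF A wc[OF that(1)] wc[OF that(2)]] comm_scalar_prod[of _ n] A wc that
    by (metis mult_mat_vec_carrier)
  then have B: "B \<in> carrier_mat (n-m) (n-m)" "B\<^sup>T = B"
    unfolding B_def by (auto intro!: eq_matI)
  obtain y \<mu> where "eigenvector B y \<mu>" using symmetric_real_eigenvector[OF B] mn by auto
  then have y: "y \<in> carrier_vec (n-m)" "y \<noteq> 0\<^sub>v (n-m)" "B *\<^sub>v y = \<mu> \<cdot>\<^sub>v y"
    unfolding eigenvector_def using B by auto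
  define x where "x = vec n (\<lambda>i. \<Sum>j\<in>{0..<n-m}. y $ j * w (m+j) $ i)"
  have xc: "x \<in> carrier_vec n" unfolding x_def by simp
  note coord = orthonormal_on_scalar_prod_tail_lincomb[OF won, where m = m and y = y, folded x_def]
  have Ax: "A *\<^sub>v x = \<mu> \<cdot>\<^sub>v x"
    unfolding x_def using ev wv y(1,3) unfolding B_def by (intro compression_eigenvector_lift[OF A won]) auto
  obtain j where j: "j < n - m" "y $ j \<noteq> 0" using y by (metis carrier_vecD eq_vecI index_zero_vec(1,2))
  then have "w (m+j) \<bullet> x \<noteq> 0" using coord[of "m+j"] by simp
  then have xnz: "x \<noteq> 0\<^sub>v n" using wc[of "m+j"] j by auto
  define z where "z = (1 / sqrt (x \<bullet> x)) \<cdot>\<^sub>v x"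
  note z = normalize_vec[OF xc xnz, folded z_def]
  have "A *\<^sub>v z = \<mu> \<cdot>\<^sub>v z" unfolding z_def using A xc Ax
    by (simp add: mult_mat_vec smult_smult_assoc mult.commute)
  moreover have "v l \<bullet> z = 0" if "l < m" for l
    using coord[of l] wv z(3) wc[of l] that mn by auto
  ultimately show ?thesis using z by blast
qed

lemma symmetric_orthonormal_eigenbasis:
  fixes A :: "real mat"
  assumes A: "A \<in> carrier_mat n n" "A\<^sup>T = A"
  shows "\<exists>v lam. orthonormal_on n v {..<n} \<and> (\<forall>k<n. A *\<^sub>v v k = lam k \<cdot>\<^sub>v v k)"
proof -
  have "\<exists>v lam. orthonormal_on n v {..<m} \<and> (\<forall>k<m. A *\<^sub>v v k = lam k \<cdot>\<^sub>v v k)" if "m \<le> n" for m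
    using that
  proof (induction m)
    case 0
    then show ?case unfolding orthonormal_on_def by auto
  next
    case (Suc m)
    then obtain v lam where on: "orthonormal_on n v {..<m}" and ev: "\<forall>k<m. A *\<^sub>v v k = lam k \<cdot>\<^sub>v v k"
      by auto
    have "m < n" using Suc.prems by simp
    then obtain z \<mu> where z: "z \<in> carrier_vec n" "z \<bullet> z = 1" "\<forall>k<m. v k \<bullet> z = 0" "A *\<^sub>v z = \<mu> \<cdot>\<^sub>v z"
      using symmetric_orthogonal_eigenvector[OF A _ on] ev by blast
    have "z \<bullet> v k = 0" if "k < m" for k
      using z(1,3) that orthonormal_onD(1)[OF on] comm_scalar_prod[of z n] by auto
    then have "orthonormal_on n (v(m := z)) {..<Suc m}"
      using on z(1-3) unfolding orthonormal_on_def lessThan_Suc by auto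
    moreover have "\<forall>k<Suc m. A *\<^sub>v (v(m := z)) k = (lam(m := \<mu>)) k \<cdot>\<^sub>v (v(m := z)) k"
      using ev z(4) by (auto simp: less_Suc_eq)
    ultimately show ?case by blast
  qed
  then show ?thesis by blast
qed

section \<open>Existence of the singular value decomposition\<close>

lemma orthogonal_vecs_normalize:
  fixes y :: "nat \<Rightarrow> real vec"
  assumes y: "\<And>k. k < n \<Longrightarrow> y k \<in> carrier_vec n"
    and orth: "\<And>k l. k < n \<Longrightarrow> l < n \<Longrightarrow> k \<noteq> l \<Longrightarrow> y k \<bullet> y l = 0"
  shows "\<exists>u. orthonormal_on n u {..<n} \<and> (\<forall>k<n. y k = sqrt (y k \<bullet> y k) \<cdot>\<^sub>v u k)"
proof -
  define K where "K = {k. k < n \<and> y k \<noteq> 0\<^sub>v n}"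
  define u where "u = (\<lambda>k. (1 / sqrt (y k \<bullet> y k)) \<cdot>\<^sub>v y k)"
  have "orthonormal_on n u K"
    unfolding orthonormal_on_def
  proof (intro conjI ballI)
    fix k l assume k: "k \<in> K" and l: "l \<in> K"
    show "u k \<in> carrier_vec n" using y k unfolding u_def K_def by auto
    show "u k \<bullet> u l = (if k = l then 1 else 0)"
      using normalize_vec(2)[of "y k" n] orth[of k l] y[of k] y[of l] k l
      unfolding u_def K_def by auto
  qed
  then obtain u' where u'K: "\<forall>k\<in>K. u' k = u k" and u': "orthonormal_on n u' {..<n}"
    using orthonormal_on_extend[of K n u] unfolding K_def by auto
  have "y k = sqrt (y k \<bullet> y k) \<cdot>\<^sub>v u' k" if k: "k < n" for k
  proof (cases "k \<in> K")
    case True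
    then have "0 < sqrt (y k \<bullet> y k)" using scalar_prod_self_pos[OF y[OF k]] unfolding K_def by simp
    then show ?thesis using u'K True unfolding u_def by (auto simp: smult_smult_assoc)
  next
    case False
    have "u' k \<in> carrier_vec n" using k orthonormal_onD(1)[OF u'] by simp
    then show ?thesis using k False unfolding K_def by (auto intro!: eq_vecI)
  qed
  then show ?thesis using u' by blast
qed

lemma gram_eigenvectors_images_orthogonal:
  fixes X :: "real mat"
  assumes X: "X \<in> carrier_mat n n" and von: "orthonormal_on n v {..<n}"
    and ev: "\<And>k. k < n \<Longrightarrow> (X\<^sup>T * X) *\<^sub>v v k = lam k \<cdot>\<^sub>v v k"
    and kl: "k < n" "l < n" "k \<noteq> l"
  shows "(X *\<^sub>v v k) \<bullet> (X *\<^sub>v v l) = 0"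
proof -
  have vc: "v k \<in> carrier_vec n" "v l \<in> carrier_vec n" using orthonormal_onD(1)[OF von] kl by auto
  have "(X *\<^sub>v v k) \<bullet> (X *\<^sub>v v l) = (X\<^sup>T *\<^sub>v (X *\<^sub>v v k)) \<bullet> v l"
    using transpose_vec_mult_scalar[OF X vc(2)] X vc by simp
  also have "X\<^sup>T *\<^sub>v (X *\<^sub>v v k) = lam k \<cdot>\<^sub>v v k" using ev[OF kl(1)] X vc by simp
  finally show ?thesis using vc orthonormal_onD(2)[OF von, of k l] kl by simp
qed

text \<open>The right singular vectors are an orthonormal eigenbasis v of X^T X; their images X v k are
  pairwise orthogonal, and normalizing them gives the left singular vectors.\<close>
lemma svd_exists:
  fixes X :: "real mat"
  assumes X: "X \<in> carrier_mat n n"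
  shows "\<exists>U S V. is_svd n X U S V"
proof -
  have "(X\<^sup>T * X)\<^sup>T = X\<^sup>T * X" using X by (simp add: transpose_mult)
  then obtain v lam where von: "orthonormal_on n v {..<n}" and ev: "\<forall>k<n. (X\<^sup>T * X) *\<^sub>v v k = lam k \<cdot>\<^sub>v v k"
    using symmetric_orthonormal_eigenbasis[of "X\<^sup>T * X" n] X by auto
  have vc: "\<And>k. k < n \<Longrightarrow> v k \<in> carrier_vec n" using orthonormal_onD(1)[OF von] by simp
  obtain u where uon: "orthonormal_on n u {..<n}"
    and Xv: "\<forall>k<n. X *\<^sub>v v k = sqrt ((X *\<^sub>v v k) \<bullet> (X *\<^sub>v v k)) \<cdot>\<^sub>v u k"
    using orthogonal_vecs_normalize[of n "\<lambda>k. X *\<^sub>v v k"] X vc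
      gram_eigenvectors_images_orthogonal[OF X von] ev by force
  define \<sigma> where "\<sigma> = (\<lambda>k. sqrt ((X *\<^sub>v v k) \<bullet> (X *\<^sub>v v k)))"
  define U V S where "U = mat_of_col_fun n u" and "V = mat_of_col_fun n v" and "S = mat_diag n \<sigma>"
  have carr: "U \<in> carrier_mat n n" "V \<in> carrier_mat n n" "S \<in> carrier_mat n n"
    unfolding U_def V_def S_def by auto
  have "X = X * (V * V\<^sup>T)"
    using orthonormal_on_orthogonal_mat(2)[OF von] X unfolding V_def by simp
  also have "\<dots> = (X * V) * V\<^sup>T" using X carr by (simp add: assoc_mult_mat[of _ n n _ n _ n])
  also have "X * V = U * S"
    unfolding U_def V_def S_def using Xv vc orthonormal_onD(1)[OF uon] unfolding \<sigma>_def
    by (intro mult_mat_of_col_fun[OF X]) auto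
  finally have "X = U * S * V\<^sup>T" .
  moreover have "diagonal_mat S" "\<forall>i<n. S $$ (i,i) \<ge> 0"
    unfolding S_def \<sigma>_def mat_diag_def diagonal_mat_def by (auto simp: scalar_prod_self_nonneg)
  moreover have "U\<^sup>T * U = 1\<^sub>m n" "V\<^sup>T * V = 1\<^sub>m n"
    unfolding U_def V_def using orthonormal_on_orthogonal_mat(1) uon von by auto
  ultimately show ?thesis unfolding is_svd_def using X carr by blast
qed

lemma is_svd_mat_diag:
  assumes "is_svd n X U S V"
  shows "is_svd n X U (mat_diag n (\<lambda>k. S $$ (k,k))) V" "S = mat_diag n (\<lambda>k. S $$ (k,k))"
proof -
  show S: "S = mat_diag n (\<lambda>k. S $$ (k,k))"
    using assms unfolding is_svd_def diagonal_mat_def by (auto intro!: eq_matI simp: mat_diag_def)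
  show "is_svd n X U (mat_diag n (\<lambda>k. S $$ (k,k))) V" using assms S by simp
qed

lemma msgn_svd:
  assumes X: "X \<in> carrier_mat n n"
  shows "\<exists>U s V. is_svd n X U (mat_diag n s) V \<and> msgn X = U * map_mat sgn (mat_diag n s) * V\<^sup>T"
proof -
  have "\<exists>Y U S V. is_svd (dim_row X) X U S V \<and> Y = U * map_mat sgn S * V\<^sup>T"
    using svd_exists[OF X] X by auto
  from someI_ex[OF this] obtain U S V where "is_svd n X U S V" "msgn X = U * map_mat sgn S * V\<^sup>T"
    using X unfolding msgn_def by auto
  then show ?thesis using is_svd_mat_diag by metis
qed

section \<open>Functions of a symmetric matrix\<close>

text \<open>Lagrange interpolation inside an algebra of functions: any function of tau on the finitely
  many points tau 0, ..., tau (n - 1) is a polynomial in tau there.\<close>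
lemma interpolation_closed:
  fixes P :: "(nat \<Rightarrow> real) \<Rightarrow> bool" and tau :: "nat \<Rightarrow> real"
  assumes one: "P (\<lambda>_. 1)" and tau: "P tau"
    and mult: "\<And>g h. P g \<Longrightarrow> P h \<Longrightarrow> P (\<lambda>k. g k * h k)"
    and add: "\<And>g h. P g \<Longrightarrow> P h \<Longrightarrow> P (\<lambda>k. g k + h k)"
    and smult: "\<And>g c. P g \<Longrightarrow> P (\<lambda>k. c * g k)"
  shows "\<exists>g. P g \<and> (\<forall>k<n. g k = f (tau k))"
proof -
  have prod: "P (\<lambda>k. \<Prod>t\<in>F. h t k)" if "finite F" "\<And>t. t \<in> F \<Longrightarrow> P (h t)" for F h
    using that by (induction F rule: finite_induct) (auto intro: one mult)
  have sum: "P (\<lambda>k. \<Sum>t\<in>F. h t k)" if "finite F" "\<And>t. t \<in> F \<Longrightarrow> P (h t)" for F h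
    using that by (induction F rule: finite_induct) (auto intro: smult[OF one, of 0, simplified] add)
  define T where "T = tau ` {0..<n}"
  define e where "e = (\<lambda>t0 k. \<Prod>t\<in>T-{t0}. (tau k - t) / (t0 - t))"
  have "P (\<lambda>k. (1 / (t0 - t)) * tau k + (- t / (t0 - t)) * 1)" for t0 t
    by (intro add smult tau one)
  then have "P (\<lambda>k. (tau k - t) / (t0 - t))" for t0 t
    by (simp add: diff_divide_distrib)
  then have Pe: "P (e t0)" for t0
    unfolding e_def by (intro prod) (auto simp: T_def)
  define g where "g = (\<lambda>k. \<Sum>t0\<in>T. f t0 * e t0 k)"
  have "P g" unfolding g_def by (intro sum smult Pe) (simp add: T_def)
  moreover have "g k = f (tau k)" if k: "k < n" for k
  proof -
    have tk: "tau k \<in> T" unfolding T_def using k by auto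
    have "e t0 k = (if t0 = tau k then 1 else 0)" if "t0 \<in> T" for t0
      using tk by (auto simp: e_def T_def intro!: prod_zero)
    then have "g k = (\<Sum>t0\<in>T. if t0 = tau k then f t0 else 0)"
      unfolding g_def by (intro sum.cong refl) auto
    also have "\<dots> = f (tau k)" using tk by (simp add: T_def)
    finally show ?thesis .
  qed
  ultimately show ?thesis by blast
qed

definition spectral_mat :: "nat \<Rightarrow> real mat \<Rightarrow> (nat \<Rightarrow> real) \<Rightarrow> real mat" where
  "spectral_mat n V g = V * mat_diag n g * V\<^sup>T"

context
  fixes n :: nat and V :: "real mat"
  assumes V: "V \<in> carrier_mat n n" "V\<^sup>T * V = 1\<^sub>m n"
begin

lemma spectral_mat_carrier[simp]: "spectral_mat n V g \<in> carrier_mat n n"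
  unfolding spectral_mat_def using V by auto

lemma orthogonal_mat_right_inverse: "V * V\<^sup>T = 1\<^sub>m n"
  by (rule mat_mult_left_right_inverse[OF _ _ V(2)]) (use V in auto)

lemma spectral_mat_mult: "spectral_mat n V g * spectral_mat n V h = spectral_mat n V (\<lambda>k. g k * h k)"
proof -
  define D E T where "D = mat_diag n g" and "E = mat_diag n h" and "T = V\<^sup>T"
  have c: "D \<in> carrier_mat n n" "E \<in> carrier_mat n n" "T \<in> carrier_mat n n" "V * D \<in> carrier_mat n n"
    "V * E \<in> carrier_mat n n" "V * D * T \<in> carrier_mat n n"
    unfolding D_def E_def T_def using V by auto
  have "spectral_mat n V g * spectral_mat n V h = (V * D * T) * ((V * E) * T)"
    unfolding spectral_mat_def D_def E_def T_def ..
  also have "\<dots> = ((V * D * T) * (V * E)) * T" by (rule assoc_mult_mat[OF c(6,5,3), symmetric])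
  also have "(V * D * T) * (V * E) = ((V * D) * (T * V)) * E"
    using c V by (simp only: assoc_mult_mat[OF c(6) V(1) c(2), symmetric] assoc_mult_mat[OF c(4,3) V(1)])
  also have "\<dots> = V * (D * E)" unfolding T_def V(2) using c V by simp
  finally show ?thesis unfolding spectral_mat_def D_def E_def T_def by simp
qed

lemma spectral_mat_add: "spectral_mat n V g + spectral_mat n V h = spectral_mat n V (\<lambda>k. g k + h k)"
proof -
  have "spectral_mat n V g + spectral_mat n V h = (V * mat_diag n g + V * mat_diag n h) * V\<^sup>T"
    unfolding spectral_mat_def using V by (intro add_mult_distrib_mat[of _ n n _ _ n, symmetric]) auto
  also have "V * mat_diag n g + V * mat_diag n h = V * (mat_diag n g + mat_diag n h)"
    using V by (intro mult_add_distrib_mat[of _ n n _ n, symmetric]) auto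
  finally show ?thesis unfolding spectral_mat_def mat_diag_add .
qed

lemma spectral_mat_smult: "c \<cdot>\<^sub>m spectral_mat n V g = spectral_mat n V (\<lambda>k. c * g k)"
  unfolding spectral_mat_def mat_diag_smult[symmetric] using V
  by (simp add: mult_smult_distrib[of V n n _ n] mult_smult_assoc_mat[of _ n n _ n])

lemma spectral_mat_one: "spectral_mat n V (\<lambda>_. 1) = 1\<^sub>m n"
  unfolding spectral_mat_def using V orthogonal_mat_right_inverse by simp

lemma spectral_mat_fun_closed:
  fixes P :: "real mat \<Rightarrow> bool"
  assumes one: "P (1\<^sub>m n)"
    and mult: "\<And>A B. P A \<Longrightarrow> P B \<Longrightarrow> P (A * B)"
    and add: "\<And>A B. P A \<Longrightarrow> P B \<Longrightarrow> P (A + B)"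
    and smult: "\<And>A c. P A \<Longrightarrow> P (c \<cdot>\<^sub>m A)"
    and tau: "P (spectral_mat n V tau)"
    and g: "\<And>k j. k < n \<Longrightarrow> j < n \<Longrightarrow> tau k = tau j \<Longrightarrow> g k = g j"
  shows "P (spectral_mat n V g)"
proof -
  define f where "f = (\<lambda>t. g (SOME k. k < n \<and> tau k = t))"
  obtain h where "P (spectral_mat n V h)" and h: "\<forall>k<n. h k = f (tau k)"
    using interpolation_closed[of "\<lambda>g. P (spectral_mat n V g)" tau n f] tau
      one[folded spectral_mat_one] mult[of "spectral_mat n V _" "spectral_mat n V _", unfolded spectral_mat_mult]
      add[of "spectral_mat n V _" "spectral_mat n V _", unfolded spectral_mat_add]
      smult[of "spectral_mat n V _", unfolded spectral_mat_smult]
    by blast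
  moreover have "h k = g k" if "k < n" for k
  proof -
    define j where "j = (SOME j. j < n \<and> tau j = tau k)"
    have "j < n \<and> tau j = tau k" unfolding j_def by (rule someI_ex) (use that in blast)
    then have "g j = g k" using g[of j k] that by blast
    moreover have "h k = g j" using h that unfolding f_def j_def by simp
    ultimately show ?thesis by simp
  qed
  then have "spectral_mat n V h = spectral_mat n V g"
    unfolding spectral_mat_def by (simp cong: mat_diag_cong)
  ultimately show ?thesis by simp
qed

text \<open>In the coordinates w = V^T x the matrix acts diagonally, so w is supported on the indices k
  with tau k = c.\<close>
lemma spectral_mat_fun_eigenvector:
  assumes x: "x \<in> carrier_vec n" and ev: "spectral_mat n V tau *\<^sub>v x = c \<cdot>\<^sub>v x"
    and g: "\<And>k. k < n \<Longrightarrow> tau k = c \<Longrightarrow> g k = d"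
  shows "spectral_mat n V g *\<^sub>v x = d \<cdot>\<^sub>v x"
proof -
  define w where "w = V\<^sup>T *\<^sub>v x"
  have w: "w \<in> carrier_vec n" unfolding w_def using V x by simp
  have Vw: "V *\<^sub>v w = x"
    using orthogonal_mat_right_inverse assoc_mult_mat_vec[of V n n "V\<^sup>T" n x] V x unfolding w_def by simp
  have VtV: "V\<^sup>T *\<^sub>v (V *\<^sub>v z) = z" if "z \<in> carrier_vec n" for z
    using V that assoc_mult_mat_vec[of "V\<^sup>T" n n V n z] by simp
  have act: "spectral_mat n V g *\<^sub>v x = V *\<^sub>v (mat_diag n g *\<^sub>v w)" for g
    unfolding spectral_mat_def w_def using V x by (simp add: assoc_mult_mat_vec[of _ n n _ n])
  have "mat_diag n tau *\<^sub>v w = V\<^sup>T *\<^sub>v (spectral_mat n V tau *\<^sub>v x)"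
    unfolding act using VtV[OF mult_mat_vec_carrier[OF mat_diag_dim w]] by simp
  also have "\<dots> = c \<cdot>\<^sub>v w" unfolding ev w_def using V x by (simp add: mult_mat_vec)
  finally have Dw: "mat_diag n tau *\<^sub>v w = c \<cdot>\<^sub>v w" .
  have "g k * w $ k = d * w $ k" if "k < n" for k
  proof -
    have "tau k * w $ k = c * w $ k"
      using arg_cong[OF Dw, of "\<lambda>z. z $ k"] index_mat_diag_mult_vec[OF w that] w that by simp
    then show ?thesis using g[OF that] by (cases "w $ k = 0") auto
  qed
  then have "mat_diag n g *\<^sub>v w = d \<cdot>\<^sub>v w"
    using w index_mat_diag_mult_vec[OF w] by (intro eq_vecI) auto
  then show ?thesis unfolding act using V w Vw by (simp add: mult_mat_vec)
qed

end

section \<open>The sign of a singular value decomposition\<close>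

context
  fixes n :: nat and X U V :: "real mat" and s :: "nat \<Rightarrow> real"
  assumes svd: "is_svd n X U (mat_diag n s) V"
begin

lemma svdD:
  shows "X \<in> carrier_mat n n" "U \<in> carrier_mat n n" "V \<in> carrier_mat n n"
    "U\<^sup>T * U = 1\<^sub>m n" "V\<^sup>T * V = 1\<^sub>m n" "X = U * mat_diag n s * V\<^sup>T" "\<And>k. k < n \<Longrightarrow> s k \<ge> 0"
  using svd unfolding is_svd_def by (auto simp: mat_diag_def)

lemma svd_singular_value_eqI: "k < n \<Longrightarrow> s k * s k = c * c \<Longrightarrow> s k = \<bar>c\<bar>"
  using svdD(7)[of k] power2_eq_iff_nonneg[of "s k" "\<bar>c\<bar>"] by (simp add: power2_eq_square)

lemma svd_gram: "X\<^sup>T * X = spectral_mat n V (\<lambda>k. s k * s k)"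
proof -
  note c = svdD(1-3) mat_diag_dim[of n s]
  note sq = assoc_mult_mat[of _ n n _ n _ n] mult_carrier_mat[of _ n n _ n]
  have "X\<^sup>T = V * mat_diag n s * U\<^sup>T"
    unfolding svdD(6) using c by (simp add: transpose_mult[of _ n n _ n] sq transpose_mat_diag)
  then have "X\<^sup>T * X = V * mat_diag n s * (U\<^sup>T * U) * mat_diag n s * V\<^sup>T"
    using c by (simp add: sq, subst svdD(6), simp add: sq)
  also have "\<dots> = spectral_mat n V (\<lambda>k. s k * s k)"
    unfolding svdD(4) spectral_mat_def using c by (simp add: sq right_mult_one_mat[of _ n n] flip: mat_diag_diag)
  finally show ?thesis .
qed

text \<open>Since s (1/s) = sgn s with the convention 1/0 = 0, the sign part is X times the inverse
  square root of the Gram matrix on its support.\<close>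
lemma svd_sign_eq: "U * map_mat sgn (mat_diag n s) * V\<^sup>T = X * spectral_mat n V (\<lambda>k. 1 / s k)"
proof -
  note c = svdD(1-3) mat_diag_dim[of n s]
  note sq = assoc_mult_mat[of _ n n _ n _ n] mult_carrier_mat[of _ n n _ n]
  have "X * spectral_mat n V (\<lambda>k. 1 / s k) = U * mat_diag n s * (V\<^sup>T * V) * mat_diag n (\<lambda>k. 1 / s k) * V\<^sup>T"
    unfolding spectral_mat_def svdD(6) using c by (simp add: sq)
  also have "\<dots> = U * (mat_diag n s * mat_diag n (\<lambda>k. 1 / s k)) * V\<^sup>T"
    unfolding svdD(5) using c by (simp add: sq right_mult_one_mat[of _ n n] del: mat_diag_diag)
  also have "mat_diag n s * mat_diag n (\<lambda>k. 1 / s k) = map_mat sgn (mat_diag n s)"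
    unfolding mat_diag_diag map_mat_sgn_mat_diag
  proof (intro mat_diag_cong)
    fix k assume "k < n"
    then show "s k * (1 / s k) = sgn (s k)" using svdD(7)[of k] by (auto simp: sgn_if)
  qed
  finally show ?thesis ..
qed

lemma svd_sign_in_subalgebra:
  fixes P :: "real mat \<Rightarrow> bool"
  assumes one: "P (1\<^sub>m n)"
    and mult: "\<And>A B. P A \<Longrightarrow> P B \<Longrightarrow> P (A * B)"
    and add: "\<And>A B. P A \<Longrightarrow> P B \<Longrightarrow> P (A + B)"
    and smult: "\<And>A c. P A \<Longrightarrow> P (c \<cdot>\<^sub>m A)"
    and X: "P X" "P X\<^sup>T"
  shows "P (U * map_mat sgn (mat_diag n s) * V\<^sup>T)"
proof -
  have "P (spectral_mat n V (\<lambda>k. 1 / s k))"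
  proof (rule spectral_mat_fun_closed[OF svdD(3,5), where P = P and tau = "\<lambda>k. s k * s k"])
    show "P (spectral_mat n V (\<lambda>k. s k * s k))"
      using mult[OF X(2) X(1)] unfolding svd_gram .
    fix k j assume "k < n" "j < n" "s k * s k = s j * s j"
    then have "s k = \<bar>s j\<bar>" by (intro svd_singular_value_eqI)
    then show "1 / s k = 1 / s j" using svdD(7)[of j] \<open>j < n\<close> by simp
  qed (fact one mult add smult)+
  then show ?thesis unfolding svd_sign_eq using mult[OF X(1)] by blast
qed

lemma svd_sign_contraction:
  assumes x: "x \<in> carrier_vec n"
  shows "((U * map_mat sgn (mat_diag n s) * V\<^sup>T) *\<^sub>v x) \<bullet> ((U * map_mat sgn (mat_diag n s) * V\<^sup>T) *\<^sub>v x) \<le> x \<bullet> x"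
proof -
  note c = svdD(1-3)
  define z where "z = V\<^sup>T *\<^sub>v x"
  define G where "G = mat_diag n (\<lambda>k. sgn (s k))"
  have z: "z \<in> carrier_vec n" unfolding z_def using c x by simp
  have Gz: "G *\<^sub>v z \<in> carrier_vec n" unfolding G_def by (rule mult_mat_vec_carrier[OF mat_diag_dim z])
  have "(U * map_mat sgn (mat_diag n s) * V\<^sup>T) *\<^sub>v x = U *\<^sub>v (G *\<^sub>v z)"
    unfolding z_def G_def map_mat_sgn_mat_diag using c x by (simp add: assoc_mult_mat_vec[of _ n n _ n])
  also have "\<dots> \<bullet> \<dots> = (G *\<^sub>v z) \<bullet> (G *\<^sub>v z)"
    by (rule orthogonal_mat_scalar_prod[OF c(2) svdD(4) Gz])
  also have "\<dots> \<le> z \<bullet> z" unfolding G_def by (rule mat_diag_contraction[OF _ z]) (simp add: abs_sgn_eq)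
  also have "z \<bullet> z = x \<bullet> x"
    unfolding z_def using orthogonal_mat_scalar_prod[of "V\<^sup>T" n x] orthogonal_mat_right_inverse[OF svdD(3,5)] c x
    by simp
  finally show ?thesis .
qed

lemma svd_sign_common_eigenvector:
  assumes x: "x \<in> carrier_vec n" and Xx: "X *\<^sub>v x = \<alpha> \<cdot>\<^sub>v x" and Xtx: "X\<^sup>T *\<^sub>v x = \<alpha> \<cdot>\<^sub>v x"
  shows "(U * map_mat sgn (mat_diag n s) * V\<^sup>T) *\<^sub>v x = sgn \<alpha> \<cdot>\<^sub>v x"
proof -
  note c = svdD(1-3) and V = svdD(3,5)
  have Xt: "X\<^sup>T \<in> carrier_mat n n" using c by simp
  have "(X\<^sup>T * X) *\<^sub>v x = X\<^sup>T *\<^sub>v (X *\<^sub>v x)" using c x by simp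
  also have "\<dots> = (\<alpha> * \<alpha>) \<cdot>\<^sub>v x"
    unfolding Xx mult_mat_vec[OF Xt x] Xtx by (simp add: smult_smult_assoc)
  finally have Sx: "spectral_mat n V (\<lambda>k. 1 / s k) *\<^sub>v x = (1 / \<bar>\<alpha>\<bar>) \<cdot>\<^sub>v x"
    unfolding svd_gram
  proof (rule spectral_mat_fun_eigenvector[OF V x])
    fix k assume "k < n" "s k * s k = \<alpha> * \<alpha>"
    then have "s k = \<bar>\<alpha>\<bar>" by (rule svd_singular_value_eqI)
    then show "1 / s k = 1 / \<bar>\<alpha>\<bar>" by simp
  qed
  have "(X * spectral_mat n V (\<lambda>k. 1 / s k)) *\<^sub>v x = X *\<^sub>v ((1 / \<bar>\<alpha>\<bar>) \<cdot>\<^sub>v x)"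
    unfolding assoc_mult_mat_vec[OF c(1) spectral_mat_carrier[OF V] x] Sx ..
  also have "\<dots> = (1 / \<bar>\<alpha>\<bar> * \<alpha>) \<cdot>\<^sub>v x" unfolding mult_mat_vec[OF c(1) x] Xx smult_smult_assoc ..
  also have "1 / \<bar>\<alpha>\<bar> * \<alpha> = sgn \<alpha>" by (simp add: real_sgn_eq)
  finally show ?thesis unfolding svd_sign_eq .
qed

end

section \<open>Block matrices with constant blocks\<close>

lemma sum_div_const:
  fixes f :: "nat \<Rightarrow> 'a :: comm_semiring_1"
  shows "(\<Sum>t\<in>{0..<C*M}. f (t div C)) = of_nat C * (\<Sum>k\<in>{0..<M}. f k)"
proof (induction M)
  case (Suc M)
  have "t div C = M" if "t \<in> {C*M..<C*M+C}" for t
    using that by (intro div_nat_eqI) (auto simp: mult.commute)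
  then have "(\<Sum>t\<in>{C*M..<C*M+C}. f (t div C)) = (\<Sum>t\<in>{C*M..<C*M+C}. f M)"
    by (intro sum.cong refl) simp
  then have "(\<Sum>t\<in>{0..<C * Suc M}. f (t div C)) = (\<Sum>t\<in>{0..<C*M}. f (t div C)) + of_nat C * f M"
    using sum.atLeastLessThan_concat[of 0 "C*M" "C*M+C" "\<lambda>t. f (t div C)"] by (simp add: algebra_simps)
  then show ?case using Suc by (simp add: algebra_simps)
qed simp

lemma Qmat_carrier[simp]: "Qmat C M c d \<in> carrier_mat (C*M) (C*M)"
  and Qmat_dims[simp]: "dim_row (Qmat C M c d) = C*M" "dim_col (Qmat C M c d) = C*M"
  unfolding Qmat_def by simp_all

lemma index_Qmat:
  "r < C*M \<Longrightarrow> s < C*M \<Longrightarrow>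
   Qmat C M c d $$ (r,s) = (if r = s then c (r div C) else 0) + d (r div C) (s div C)"
  unfolding Qmat_def by simp

lemma Qmat_mult:
  "Qmat C M c d * Qmat C M c' d' = Qmat C M (\<lambda>i. c i * c' i)
     (\<lambda>i j. c i * d' i j + d i j * c' j + real C * (\<Sum>k\<in>{0..<M}. d i k * d' k j))"
proof (rule eq_matI)
  fix r s assume "r < dim_row (Qmat C M (\<lambda>i. c i * c' i)
     (\<lambda>i j. c i * d' i j + d i j * c' j + real C * (\<Sum>k\<in>{0..<M}. d i k * d' k j)))"
    "s < dim_col (Qmat C M (\<lambda>i. c i * c' i)
     (\<lambda>i j. c i * d' i j + d i j * c' j + real C * (\<Sum>k\<in>{0..<M}. d i k * d' k j)))"
  then have r: "r < C*M" and s: "s < C*M" by auto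
  define i j where "i = r div C" and "j = s div C"
  have "(Qmat C M c d * Qmat C M c' d') $$ (r,s) =
     (\<Sum>t\<in>{0..<C*M}. Qmat C M c d $$ (r,t) * Qmat C M c' d' $$ (t,s))"
    using r s by (simp add: scalar_prod_def)
  also have "\<dots> = (\<Sum>t\<in>{0..<C*M}.
       (if t = r then (if r = s then c i * c' i else 0) else 0)
     + (if t = r then c i * d' (t div C) j else 0)
     + (if t = s then d i j * c' j else 0)
     + d i (t div C) * d' (t div C) j)"
    by (intro sum.cong refl) (auto simp: index_Qmat r s i_def j_def algebra_simps)
  also have "\<dots> = (if r = s then c i * c' i else 0) + c i * d' i j + d i j * c' j
      + (\<Sum>t\<in>{0..<C*M}. d i (t div C) * d' (t div C) j)"
    using r s by (simp add: sum.distrib i_def)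
  also have "(\<Sum>t\<in>{0..<C*M}. d i (t div C) * d' (t div C) j) = real C * (\<Sum>k\<in>{0..<M}. d i k * d' k j)"
    by (rule sum_div_const)
  finally show "(Qmat C M c d * Qmat C M c' d') $$ (r,s) = Qmat C M (\<lambda>i. c i * c' i)
     (\<lambda>i j. c i * d' i j + d i j * c' j + real C * (\<Sum>k\<in>{0..<M}. d i k * d' k j)) $$ (r,s)"
    using r s by (simp add: index_Qmat i_def j_def)
qed auto

lemma Qmat_add: "Qmat C M c d + Qmat C M c' d' = Qmat C M (\<lambda>i. c i + c' i) (\<lambda>i j. d i j + d' i j)"
  by (rule eq_matI) (auto simp: Qmat_def)

lemma Qmat_smult: "x \<cdot>\<^sub>m Qmat C M c d = Qmat C M (\<lambda>i. x * c i) (\<lambda>i j. x * d i j)"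
  by (rule eq_matI) (auto simp: Qmat_def algebra_simps)

lemma Qmat_transpose: "(Qmat C M c d)\<^sup>T = Qmat C M c (\<lambda>i j. d j i)"
  by (rule eq_matI) (auto simp: Qmat_def)

lemma Qmat_one: "1\<^sub>m (C*M) = Qmat C M (\<lambda>_. 1) (\<lambda>_ _. 0)"
  by (rule eq_matI) (auto simp: Qmat_def)

text \<open>For C = 1 the blocks are 1 x 1, so the diagonal part and the block part overlap.\<close>
lemma Qmat_shift_diag:
  assumes "\<And>i. i < M \<Longrightarrow> C = 1 \<or> c i = c' i"
  shows "Qmat C M c d = Qmat C M c' (\<lambda>i j. d i j + (if i = j then c i - c' i else 0))"
proof (rule eq_matI)
  fix r s assume "r < dim_row (Qmat C M c' (\<lambda>i j. d i j + (if i = j then c i - c' i else 0)))"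
    "s < dim_col (Qmat C M c' (\<lambda>i j. d i j + (if i = j then c i - c' i else 0)))"
  then have rs: "r < C*M" "s < C*M" by auto
  then have "r div C < M" by (simp add: less_mult_imp_div_less mult.commute)
  then show "Qmat C M c d $$ (r,s) = Qmat C M c' (\<lambda>i j. d i j + (if i = j then c i - c' i else 0)) $$ (r,s)"
    using assms[of "r div C"] rs by (auto simp: index_Qmat)
qed auto

text \<open>Inside block i the vector e_(iC) - e_(iC+1) has coordinate sum 0, so the J-blocks annihilate it.\<close>
lemma Qmat_block_eigenvector:
  assumes C: "C \<ge> 2" and i: "i < M"
  defines "v \<equiv> vec (C*M) (\<lambda>t. if t = i*C then 1 else if t = i*C + 1 then -1 else (0::real))"
  shows "Qmat C M c d *\<^sub>v v = c i \<cdot>\<^sub>v v"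
proof (rule eq_vecI)
  have p: "i*C + 1 < C*M"
  proof -
    have "i*C + 1 < (i+1)*C" using C by simp
    also have "\<dots> \<le> M*C" using i by (intro mult_right_mono) auto
    finally show ?thesis by (simp add: mult.commute)
  qed
  then have p0: "i*C < C*M" by linarith
  have d1: "(i*C) div C = i" and d2: "(i*C + 1) div C = i"
    using C by (auto intro!: div_nat_eqI simp: algebra_simps)
  fix t assume "t < dim_vec (c i \<cdot>\<^sub>v v)"
  then have t: "t < C*M" unfolding v_def by simp
  have "(Qmat C M c d *\<^sub>v v) $ t = (\<Sum>s\<in>{0..<C*M}. Qmat C M c d $$ (t, s) * v $ s)"
    using t by (simp add: v_def scalar_prod_def)
  also have "\<dots> = (\<Sum>s\<in>{0..<C*M}.
      (if s = i*C then Qmat C M c d $$ (t, i*C) else 0) - (if s = i*C + 1 then Qmat C M c d $$ (t, i*C + 1) else 0))"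
    by (intro sum.cong refl) (auto simp: v_def)
  also have "\<dots> = Qmat C M c d $$ (t, i*C) - Qmat C M c d $$ (t, i*C + 1)"
    using p C i by (simp add: sum_subtractf)
  also have "\<dots> = (c i \<cdot>\<^sub>v v) $ t"
    using t p p0 d1 d2 unfolding v_def by (auto simp: index_Qmat)
  finally show "(Qmat C M c d *\<^sub>v v) $ t = (c i \<cdot>\<^sub>v v) $ t" .
qed (simp add: v_def)

text \<open>Test the contraction on the indicator vector of block j, of squared norm C: on block i its
  image is constant up to the diagonal entry, so it has squared norm at least C times the square
  of the coefficient.\<close>
lemma Qmat_contraction_block_bound:
  assumes contr: "\<And>x. x \<in> carrier_vec (C*M) \<Longrightarrow> (Qmat C M c d *\<^sub>v x) \<bullet> (Qmat C M c d *\<^sub>v x) \<le> x \<bullet> x"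
    and C: "C \<ge> 1" and i: "i < M" and j: "j < M"
  shows "\<bar>(if i = j then c i else 0) + real C * d i j\<bar> \<le> 1"
proof -
  define x where "x = vec (C*M) (\<lambda>s. if s div C = j then 1 else (0::real))"
  define y where "y = Qmat C M c d *\<^sub>v x"
  define \<gamma> where "\<gamma> = (if i = j then c i else 0) + real C * d i j"
  have xx: "x \<bullet> x = real C"
    using sum_div_const[of "\<lambda>k. if k = j then 1 else (0::real)" C M] j
    unfolding x_def by (simp add: scalar_prod_def if_distrib cong: if_cong)
  have y: "y $ r = (if r div C = j then c (r div C) else 0) + real C * d (r div C) j" if r: "r < C*M" for r
  proof -
    have "y $ r = (\<Sum>s\<in>{0..<C*M}. Qmat C M c d $$ (r, s) * x $ s)"
      using r by (simp add: y_def x_def scalar_prod_def)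
    also have "\<dots> = (\<Sum>s\<in>{0..<C*M}. (if s = r then (if r div C = j then c (r div C) else 0) else 0)
        + (\<lambda>k. if k = j then d (r div C) k else 0) (s div C))"
      using r by (intro sum.cong refl) (auto simp: x_def index_Qmat)
    finally show ?thesis
      using r j sum_div_const[of "\<lambda>k. if k = j then d (r div C) k else 0" C M] by (simp add: sum.distrib)
  qed
  have "real C * (\<gamma> * \<gamma>) = (\<Sum>r\<in>{0..<C*M}. (\<lambda>k. if k = i then \<gamma> * \<gamma> else 0) (r div C))"
    using i sum_div_const[of "\<lambda>k. if k = i then \<gamma> * \<gamma> else 0" C M] by simp
  also have "\<dots> \<le> (\<Sum>r\<in>{0..<C*M}. y $ r * y $ r)"
    using y unfolding \<gamma>_def by (intro sum_mono) auto
  also have "\<dots> = y \<bullet> y" by (simp add: y_def scalar_prod_def)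
  also have "\<dots> \<le> real C" using contr[of x] xx unfolding y_def x_def by simp
  finally have "\<gamma> * \<gamma> \<le> 1" using C by simp
  then show ?thesis unfolding \<gamma>_def by (metis abs_le_square_iff abs_one mult_1 power2_eq_square)
qed

lemma msgn_Qmat:
  assumes C: "C \<ge> 1"
  obtains c d where "msgn (Qmat C M a b) = Qmat C M c d"
    and "\<And>i. i < M \<Longrightarrow> C = 1 \<or> c i = sgn (a i)"
    and "\<And>i j. i < M \<Longrightarrow> j < M \<Longrightarrow> \<bar>(if i = j then c i else 0) + real C * d i j\<bar> \<le> 1"
proof -
  obtain U s V where svd: "is_svd (C*M) (Qmat C M a b) U (mat_diag (C*M) s) V"
    and msgn: "msgn (Qmat C M a b) = U * map_mat sgn (mat_diag (C*M) s) * V\<^sup>T"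
    using msgn_svd[OF Qmat_carrier] by blast
  have "\<exists>c d. U * map_mat sgn (mat_diag (C*M) s) * V\<^sup>T = Qmat C M c d"
  proof (rule svd_sign_in_subalgebra[OF svd])
    show "\<exists>c d. A * B = Qmat C M c d" if "\<exists>c d. A = Qmat C M c d" "\<exists>c d. B = Qmat C M c d" for A B
      using that by (force simp: Qmat_mult)
    show "\<exists>c d. A + B = Qmat C M c d" if "\<exists>c d. A = Qmat C M c d" "\<exists>c d. B = Qmat C M c d" for A B
      using that by (force simp: Qmat_add)
    show "\<exists>c' d. x \<cdot>\<^sub>m A = Qmat C M c' d" if "\<exists>c d. A = Qmat C M c d" for A x
      using that by (force simp: Qmat_smult)
  qed (force simp: Qmat_one Qmat_transpose)+
  then obtain c d where Y: "U * map_mat sgn (mat_diag (C*M) s) * V\<^sup>T = Qmat C M c d" by blast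
  have "C = 1 \<or> c i = sgn (a i)" if i: "i < M" for i
  proof (cases "C = 1")
    case False
    then have C2: "C \<ge> 2" using C by simp
    define v where "v = vec (C*M) (\<lambda>t. if t = i*C then 1 else if t = i*C + 1 then -1 else (0::real))"
    have "c i \<cdot>\<^sub>v v = sgn (a i) \<cdot>\<^sub>v v"
      using svd_sign_common_eigenvector[OF svd, of v "a i"] Qmat_block_eigenvector[OF C2 i]
      unfolding Y Qmat_transpose v_def by simp
    then have "(c i \<cdot>\<^sub>v v) $ (i*C) = (sgn (a i) \<cdot>\<^sub>v v) $ (i*C)" by simp
    moreover have "i * C < C * M" using i C by simp
    ultimately show ?thesis unfolding v_def by simp
  qed simp
  moreover have "\<bar>(if i = j then c i else 0) + real C * d i j\<bar> \<le> 1" if "i < M" "j < M" for i j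
    using Qmat_contraction_block_bound[OF _ C that] svd_sign_contraction[OF svd] unfolding Y by blast
  ultimately show ?thesis using that msgn Y by simp
qed

lemma msgn_Qmat_sgn_decomposition:
  assumes C: "C \<ge> 1"
  obtains \<beta> where "msgn (Qmat C M a b) = Qmat C M (\<lambda>i. sgn (a i)) \<beta>"
    and "\<And>i j. i < M \<Longrightarrow> j < M \<Longrightarrow> real C * \<bar>\<beta> i j\<bar> \<le> 2"
proof -
  obtain c d where Y: "msgn (Qmat C M a b) = Qmat C M c d"
    and diag: "\<And>i. i < M \<Longrightarrow> C = 1 \<or> c i = sgn (a i)"
    and block: "\<And>i j. i < M \<Longrightarrow> j < M \<Longrightarrow> \<bar>(if i = j then c i else 0) + real C * d i j\<bar> \<le> 1"
    using msgn_Qmat[OF C] by blast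
  define \<beta> where "\<beta> = (\<lambda>i j. d i j + (if i = j then c i - sgn (a i) else 0))"
  have "msgn (Qmat C M a b) = Qmat C M (\<lambda>i. sgn (a i)) \<beta>"
    unfolding Y \<beta>_def by (rule Qmat_shift_diag) (rule diag)
  moreover have "real C * \<bar>\<beta> i j\<bar> \<le> 2" if "i < M" "j < M" for i j
  proof -
    have "real C * \<beta> i j = ((if i = j then c i else 0) + real C * d i j) - (if i = j then sgn (a i) else 0)"
      using diag[OF that(1)] unfolding \<beta>_def by (auto simp: algebra_simps)
    moreover have "\<bar>if i = j then sgn (a i) else 0\<bar> \<le> (1::real)" by (simp add: abs_sgn_eq)
    ultimately have "\<bar>real C * \<beta> i j\<bar> \<le> 2"
      using block[OF that] abs_triangle_ineq4[of "(if i = j then c i else 0) + real C * d i j"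
          "if i = j then sgn (a i) else 0"] by linarith
    then show ?thesis by (simp add: abs_mult)
  qed
  ultimately show ?thesis using that by blast
qed

theorem propositionB4:
  "\<exists>K::real. \<forall>(C::nat) (M::nat) (a::nat \<Rightarrow> real) (b::nat \<Rightarrow> nat \<Rightarrow> real).
     C \<ge> 1 \<longrightarrow> M \<ge> 1 \<longrightarrow>
     (\<exists>\<beta>::nat \<Rightarrow> nat \<Rightarrow> real.
        msgn (Qmat C M a b) =
          mat (C*M) (C*M) (\<lambda>(r,s). (if r = s then sgn (a (r div C)) else 0) + \<beta> (r div C) (s div C))
        \<and> (\<forall>i<M. \<forall>j<M. \<bar>\<beta> i j\<bar> \<le> K * real M / real C))"
proof (intro exI[of _ 2] allI impI)
  fix C M :: nat and a :: "nat \<Rightarrow> real" and b :: "nat \<Rightarrow> nat \<Rightarrow> real"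
  assume C: "C \<ge> 1" and M: "M \<ge> 1"
  obtain \<beta> where msgn: "msgn (Qmat C M a b) = Qmat C M (\<lambda>i. sgn (a i)) \<beta>"
    and bound: "\<And>i j. i < M \<Longrightarrow> j < M \<Longrightarrow> real C * \<bar>\<beta> i j\<bar> \<le> 2"
    using msgn_Qmat_sgn_decomposition[OF C] by blast
  have "\<bar>\<beta> i j\<bar> \<le> 2 * real M / real C" if "i < M" "j < M" for i j
  proof -
    have "real C * \<bar>\<beta> i j\<bar> \<le> 2 * real M" using bound[OF that] M by simp
    then show ?thesis using C by (simp add: field_simps)
  qed
  then show "\<exists>\<beta>. msgn (Qmat C M a b) =
      mat (C*M) (C*M) (\<lambda>(r,s). (if r = s then sgn (a (r div C)) else 0) + \<beta> (r div C) (s div C))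
    \<and> (\<forall>i<M. \<forall>j<M. \<bar>\<beta> i j\<bar> \<le> 2 * real M / real C)"
    using msgn unfolding Qmat_def by blast
qed

end
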